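(* For positive integers $n,a,b$ and a nonnegative integer $c$, $M_n(a,b,c)=M_n(b,a,c)$.
   Context: $$M_n(a,b,c):=\operatorname{CT}_x\prod_{i=1}^n(1-x_i)^{-b}x_i^{-a+1}\prod_{1\le i<j\le n}(x_j-x_i)^{-c},$$ where $\operatorname{CT}_x=\operatorname{CT}_{x_n}\cdots\operatorname{CT}_{x_1}$ is iterated constant-term extraction, $(1-x_i)^{-b}$ is expanded as a power series in $x_i$, and for $i<j$, $(x_j-x_i)^{-c}=x_j^{-c}(1-x_i/x_j)^{-c}$ is expanded as a power series in $x_i/x_j$. *)

theory Defs
  imports Complex_Main "HOL-Library.FuncSet"
begin

text \<open>Coefficient of t^k in the power series expansion of (1 - t)^(-r),
  i.e. (-1)^k * binom(-r, k) (= binom(r+k-1,k) for r >= 1, and [k=0] for r = 0).\<close>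
definition negpow_coeff :: "nat \<Rightarrow> nat \<Rightarrow> rat" where
  "negpow_coeff r k = (-1) ^ k * ((- of_nat r) gchoose k)"

text \<open>Variables x_1..x_n are indexed by 0..<n.  A term of the full expansion of
  prod_i (1-x_i)^(-b) x_i^(1-a) prod_{i<j} x_j^(-c) (1 - x_i/x_j)^(-c)
  is indexed by m i (the power taken from (1-x_i)^(-b)) and k (i,j), i<j
  (the power of x_i/x_j taken from (1-x_i/x_j)^(-c)).
  The exponent of x_j in that term:\<close>
definition ct_exponent :: "nat \<Rightarrow> nat \<Rightarrow> nat \<Rightarrow> (nat \<Rightarrow> nat) \<Rightarrow> (nat \<times> nat \<Rightarrow> nat) \<Rightarrow> nat \<Rightarrow> int" where
  "ct_exponent n a c m k j =
     1 - int a + int (m j) + (\<Sum>i\<in>{j<..<n}. int (k (j, i)))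
     - (\<Sum>i\<in>{..<j}. int c + int (k (i, j)))"

definition ct_pairs :: "nat \<Rightarrow> (nat \<times> nat) set" where
  "ct_pairs n = {(i, j). i < j \<and> j < n}"

definition ct_terms :: "nat \<Rightarrow> nat \<Rightarrow> nat \<Rightarrow> ((nat \<Rightarrow> nat) \<times> (nat \<times> nat \<Rightarrow> nat)) set" where
  "ct_terms n a c =
     {(m, k). m \<in> {..<n} \<rightarrow>\<^sub>E UNIV \<and> k \<in> ct_pairs n \<rightarrow>\<^sub>E UNIV
              \<and> (\<forall>j<n. ct_exponent n a c m k j = 0)}"

text \<open>M_n(a,b,c): the iterated constant term CT_{x_n} ... CT_{x_1} of the expansion,
  i.e. the sum of the coefficients of all expansion terms of total monomial 1.\<close>
definition M :: "nat \<Rightarrow> nat \<Rightarrow> nat \<Rightarrow> nat \<Rightarrow> rat" where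
  "M n a b c =
     (\<Sum>(m, k)\<in>ct_terms n a c.
        (\<Prod>i<n. negpow_coeff b (m i)) * (\<Prod>p\<in>ct_pairs n. negpow_coeff c (k p)))"

end

theory Submission
  imports Defs "HOL-Computational_Algebra.Formal_Power_Series"
begin

text \<open>Give every variable its own parameters, \<open>M(A; B)\<close> with \<open>a\<^sub>j = A ! j\<close> and
  \<open>b\<^sub>j = B ! j\<close>, and prove the stronger symmetry \<open>M(A; B) = M(rev B; rev A)\<close> for positive
  parameters, by induction on \<open>n\<close> in steps of two. Taking the constant term in \<open>x\<^sub>1\<close> first
  writes \<open>M(a\<^sub>1 # A; b\<^sub>1 # B)\<close> as a sum over the powers \<open>\<kappa>\<^sub>j\<close> of \<open>x\<^sub>1/x\<^sub>j\<close> of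
  \<open>M(A + c + \<kappa>; B)\<close>. Peeling off \<open>x\<^sub>1\<close> in this way, and \<open>x\<^sub>n\<close> likewise after reversing with
  the induction hypothesis, turns both sides into the same double sum of \<open>(n - 2)\<close>-variable
  constant terms, weighted by two-variable kernels that agree by a Vandermonde-type identity.
  For constant parameters the reversal is invisible, so \<open>M\<^sub>n(a, b, c) = M\<^sub>n(b, a, c)\<close>.\<close>

section \<open>Coefficients of \<open>(1 - t) ^ (-r)\<close>\<close>

lemma negpow_coeff_eq_binomial: "negpow_coeff r k = of_nat ((r + k - 1) choose k)"
proof (cases "r + k = 0")
  case True
  then show ?thesis by (simp add: negpow_coeff_def)
next
  case False
  then have "1 \<le> r + k" by arith
  then have upper: "of_nat r + of_nat k - 1 = (of_nat (r + k - 1) :: rat)"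
    using of_nat_diff[of 1 "r + k", where 'a = rat] by simp
  have "negpow_coeff r k = ((-1) ^ k * (-1) ^ k) * ((of_nat r + of_nat k - 1) gchoose k)"
    unfolding negpow_coeff_def gbinomial_minus by (simp only: mult.assoc)
  also have "(-1) ^ k * (-1) ^ k = (1::rat)"
    by (simp add: power_add[symmetric])
  finally show ?thesis
    by (simp only: upper binomial_gbinomial mult_1)
qed

lemma negpow_coeff_convolution:
  "(\<Sum>t\<le>s. negpow_coeff y t * negpow_coeff x (s - t)) = negpow_coeff (y + x) s"
proof -
  have "negpow_coeff y t * negpow_coeff x (s - t)
      = (-1) ^ s * (((- of_nat y) gchoose t) * ((- of_nat x) gchoose (s - t)))" if "t \<le> s" for t
  proof -
    have "(-1::rat) ^ t * (-1) ^ (s - t) = (-1) ^ s"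
      using that by (simp add: power_add[symmetric])
    then show ?thesis
      unfolding negpow_coeff_def by (metis mult.assoc mult.left_commute)
  qed
  then have "(\<Sum>t\<le>s. negpow_coeff y t * negpow_coeff x (s - t))
      = (-1) ^ s * (\<Sum>t\<in>{0..s}. ((- of_nat y) gchoose t) * ((- of_nat x) gchoose (s - t)))"
    by (simp add: sum_distrib_left atLeast0AtMost)
  also have "\<dots> = negpow_coeff (y + x) s"
    by (simp add: gbinomial_Vandermonde negpow_coeff_def add.commute)
  finally show ?thesis .
qed

text \<open>Both sides are the trinomial coefficient of \<open>(c + t + m - 1)\<close> over \<open>(c - 1, t, m)\<close>.\<close>

lemma negpow_coeff_trinomial:
  "negpow_coeff c t * negpow_coeff (c + t) m = negpow_coeff c m * negpow_coeff (c + m) t"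
proof -
  have "((c + t - 1) choose t) * ((c + t + m - 1) choose m)
      = ((c + m - 1) choose m) * ((c + m + t - 1) choose t)"
  proof (cases "c = 0")
    case True
    then show ?thesis by (cases t; cases m) (auto simp: binomial_eq_0)
  next
    case False
    define N where "N = c + t + m - 1"
    have N: "c + t - 1 = N - m" "c + m - 1 = N - t" "c + m + t - 1 = N"
      using False by (auto simp: N_def)
    have "(N choose m) * ((N - m) choose t) = (N choose (m + t)) * ((m + t) choose m)"
      using choose_mult[of m "m + t" N] False by (simp add: N_def algebra_simps)
    moreover have "(N choose t) * ((N - t) choose m) = (N choose (m + t)) * ((m + t) choose t)"
      using choose_mult[of t "m + t" N] False by (simp add: N_def algebra_simps)
    moreover have "(m + t) choose m = (m + t) choose t"
      using binomial_symmetric[of m "m + t"] by simp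
    ultimately show ?thesis
      unfolding N by (simp add: N_def mult.commute)
  qed
  then show ?thesis
    unfolding negpow_coeff_eq_binomial by (metis of_nat_mult)
qed

lemma negpow_coeff_pred_swap:
  assumes "0 < a" "0 < b"
  shows "negpow_coeff b (a - 1) = negpow_coeff a (b - 1)"
proof -
  obtain a' b' where "a = Suc a'" "b = Suc b'"
    using assms not0_implies_Suc by blast
  moreover have "(a' + b') choose a' = (a' + b') choose b'"
    using binomial_symmetric[of a' "a' + b'"] by simp
  ultimately show ?thesis
    unfolding negpow_coeff_eq_binomial by (simp add: add.commute)
qed

lemma negpow_coeff_convolution_swap:
  "(\<Sum>t\<le>p. negpow_coeff b (p - t) * negpow_coeff c t * negpow_coeff (a + c + t) q)
   = (\<Sum>t\<le>q. negpow_coeff a (q - t) * negpow_coeff c t * negpow_coeff (b + c + t) p)"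
proof -
  have expand: "negpow_coeff (a + c + t) q = (\<Sum>m\<le>q. negpow_coeff (c + t) m * negpow_coeff a (q - m))"
    for a t q
    using negpow_coeff_convolution[of "c + t" a q] by (simp add: add_ac)
  have "(\<Sum>t\<le>p. negpow_coeff b (p - t) * negpow_coeff c t * negpow_coeff (a + c + t) q)
      = (\<Sum>t\<le>p. \<Sum>m\<le>q. negpow_coeff b (p - t) * (negpow_coeff c t * negpow_coeff (c + t) m)
           * negpow_coeff a (q - m))"
    by (simp add: expand sum_distrib_left mult_ac)
  also have "\<dots> = (\<Sum>m\<le>q. \<Sum>t\<le>p. negpow_coeff a (q - m) * (negpow_coeff c m * negpow_coeff (c + m) t)
           * negpow_coeff b (p - t))"
    by (subst sum.swap) (simp add: negpow_coeff_trinomial mult_ac)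
  also have "\<dots> = (\<Sum>t\<le>q. negpow_coeff a (q - t) * negpow_coeff c t * negpow_coeff (b + c + t) p)"
    by (simp add: expand sum_distrib_left mult_ac)
  finally show ?thesis .
qed

definition negpow_coeff_int :: "nat \<Rightarrow> int \<Rightarrow> rat" where
  "negpow_coeff_int b x = (if x < 0 then 0 else negpow_coeff b (nat x))"

lemma sum_negpow_coeff_int_diff:
  assumes "p \<le> N"
  shows "(\<Sum>t\<le>N. negpow_coeff_int b (int p - int t) * f t) = (\<Sum>t\<le>p. negpow_coeff b (p - t) * f t)"
proof -
  have "(\<Sum>t\<le>N. negpow_coeff_int b (int p - int t) * f t)
      = (\<Sum>t\<le>p. negpow_coeff_int b (int p - int t) * f t)"
    by (rule sum.mono_neutral_right) (use assms in \<open>auto simp: negpow_coeff_int_def\<close>)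
  also have "\<dots> = (\<Sum>t\<le>p. negpow_coeff b (p - t) * f t)"
    by (rule sum.cong) (auto simp: negpow_coeff_int_def nat_diff_distrib)
  finally show ?thesis .
qed

text \<open>Taking the constant terms in \<open>x\<^sub>1\<close> and \<open>x\<^sub>n\<close> leaves this sum over the power \<open>t\<close>
  of \<open>x\<^sub>1/x\<^sub>n\<close>; its symmetry is the two-variable case of the theorem.\<close>

definition corner_kernel :: "nat \<Rightarrow> nat \<Rightarrow> nat \<Rightarrow> nat \<Rightarrow> int \<Rightarrow> int \<Rightarrow> rat" where
  "corner_kernel N c b a \<alpha> \<beta> =
     (\<Sum>t\<le>N. negpow_coeff_int b (\<alpha> - int t) * negpow_coeff c t * negpow_coeff_int (a + c + t) \<beta>)"

lemma corner_kernel_swap: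
  assumes "\<alpha> \<le> int N" "\<beta> \<le> int N"
  shows "corner_kernel N c b a \<alpha> \<beta> = corner_kernel N c a b \<beta> \<alpha>"
proof (cases "\<alpha> < 0 \<or> \<beta> < 0")
  case True
  then show ?thesis
    by (auto simp: corner_kernel_def negpow_coeff_int_def intro!: sum.neutral)
next
  case False
  then obtain p q where pq: "\<alpha> = int p" "\<beta> = int q"
    by (metis nonneg_int_cases not_less)
  with assms have "p \<le> N" "q \<le> N" by auto
  then show ?thesis
    using sum_negpow_coeff_int_diff[of p N b "\<lambda>t. negpow_coeff c t * negpow_coeff (a + c + t) q"]
      sum_negpow_coeff_int_diff[of q N a "\<lambda>t. negpow_coeff c t * negpow_coeff (b + c + t) p"]
      negpow_coeff_convolution_swap[of b p c a q]
    by (simp add: corner_kernel_def pq negpow_coeff_int_def mult.assoc)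
qed

section \<open>Constant terms with variable-dependent parameters\<close>

text \<open>In \<open>M_list A B c\<close> the variable with index \<open>j\<close> carries
  \<open>(1 - x) ^ (-B ! j) * x ^ (1 - A ! j)\<close> instead of \<open>(1 - x) ^ (-b) * x ^ (1 - a)\<close>.\<close>

definition ct_exponent_list ::
    "nat list \<Rightarrow> nat \<Rightarrow> (nat \<Rightarrow> nat) \<Rightarrow> (nat \<times> nat \<Rightarrow> nat) \<Rightarrow> nat \<Rightarrow> int" where
  "ct_exponent_list A c m k j =
     1 - int (A ! j) + int (m j) + (\<Sum>i\<in>{j<..<length A}. int (k (j, i)))
     - (\<Sum>i\<in>{..<j}. int c + int (k (i, j)))"

definition ct_terms_list :: "nat list \<Rightarrow> nat \<Rightarrow> ((nat \<Rightarrow> nat) \<times> (nat \<times> nat \<Rightarrow> nat)) set" where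
  "ct_terms_list A c =
     {(m, k). m \<in> {..<length A} \<rightarrow>\<^sub>E UNIV \<and> k \<in> ct_pairs (length A) \<rightarrow>\<^sub>E UNIV
              \<and> (\<forall>j<length A. ct_exponent_list A c m k j = 0)}"

definition ct_weight :: "nat list \<Rightarrow> nat \<Rightarrow> nat \<Rightarrow> (nat \<Rightarrow> nat) \<times> (nat \<times> nat \<Rightarrow> nat) \<Rightarrow> rat" where
  "ct_weight B n c x =
     (\<Prod>i<n. negpow_coeff (B ! i) (fst x i)) * (\<Prod>p\<in>ct_pairs n. negpow_coeff c (snd x p))"

definition M_list :: "nat list \<Rightarrow> nat list \<Rightarrow> nat \<Rightarrow> rat" where
  "M_list A B c = (\<Sum>x\<in>ct_terms_list A c. ct_weight B (length A) c x)"

lemma M_eq_M_list: "M n a b c = M_list (replicate n a) (replicate n b) c"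
proof -
  have "ct_exponent n a c m k j = ct_exponent_list (replicate n a) c m k j" if "j < n" for m k j
    using that unfolding ct_exponent_def ct_exponent_list_def by simp
  then have "ct_terms n a c = ct_terms_list (replicate n a) c"
    unfolding ct_terms_def ct_terms_list_def by auto
  then show ?thesis
    unfolding M_def M_list_def ct_weight_def
    by (auto intro!: sum.cong prod.cong simp: case_prod_beta)
qed

lemma finite_ct_pairs: "finite (ct_pairs n)"
  by (rule finite_subset[of _ "{..<n} \<times> {..<n}"]) (auto simp: ct_pairs_def)

lemma mem_ct_pairs_Suc: "p \<in> ct_pairs (Suc n) \<longleftrightarrow> fst p < snd p \<and> snd p \<le> n"
  by (cases p) (auto simp: ct_pairs_def)

lemma ct_pairs_Suc:
  "ct_pairs (Suc n) = (\<lambda>j. (0, Suc j)) ` {..<n} \<union> map_prod Suc Suc ` ct_pairs n"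
proof (rule set_eqI)
  fix p :: "nat \<times> nat"
  obtain i j where p: "p = (i, j)" by (cases p)
  show "p \<in> ct_pairs (Suc n) \<longleftrightarrow> p \<in> (\<lambda>j. (0, Suc j)) ` {..<n} \<union> map_prod Suc Suc ` ct_pairs n"
  proof (cases i)
    case (Suc i')
    then show ?thesis
      by (cases j) (auto simp: p ct_pairs_def image_iff)
  qed (cases j, auto simp: p ct_pairs_def)
qed

definition shift_params :: "nat list \<Rightarrow> nat \<Rightarrow> nat list \<Rightarrow> nat list" where
  "shift_params A c \<kappa> = map2 (\<lambda>a k. a + c + k) A \<kappa>"

lemma length_shift_params [simp]:
  "length \<kappa> = length A \<Longrightarrow> length (shift_params A c \<kappa>) = length A"
  by (simp add: shift_params_def)

lemma nth_shift_params:
  "length \<kappa> = length A \<Longrightarrow> j < length A \<Longrightarrow> shift_params A c \<kappa> ! j = A ! j + c + \<kappa> ! j"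
  by (simp add: shift_params_def)

text \<open>The powers \<open>\<kappa>\<close> of \<open>x\<^sub>1/x\<^sub>j\<close> for which the power \<open>a0 - 1 - sum_list \<kappa>\<close> of
  \<open>1 - x\<^sub>1\<close> forced by a vanishing exponent of \<open>x\<^sub>1\<close> is nonnegative.\<close>

definition first_row_exponents :: "nat \<Rightarrow> nat \<Rightarrow> nat list set" where
  "first_row_exponents n a0 = {\<kappa>. length \<kappa> = n \<and> sum_list \<kappa> < a0}"

definition bounded_lists :: "nat \<Rightarrow> nat \<Rightarrow> nat list set" where
  "bounded_lists r N = {xs. length xs = r \<and> set xs \<subseteq> {..N}}"

lemma finite_bounded_lists: "finite (bounded_lists r N)"
  unfolding bounded_lists_def using finite_lists_length_eq[of "{..N}" r] by (simp add: conj_commute)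

lemma first_row_exponents_subset: "a0 \<le> N \<Longrightarrow> first_row_exponents n a0 \<subseteq> bounded_lists n N"
  unfolding first_row_exponents_def bounded_lists_def by (auto dest!: member_le_sum_list)

lemma finite_first_row_exponents: "finite (first_row_exponents n a0)"
  using first_row_exponents_subset[of a0 a0 n] finite_bounded_lists by (meson finite_subset order_refl)

text \<open>\<open>attach_first\<close> builds a term of the expansion in \<open>n + 1\<close> variables from the powers \<open>\<kappa>\<close>
  of \<open>x\<^sub>1/x\<^sub>j\<close> and a term of the expansion in the remaining \<open>n\<close> variables;
  \<open>detach_first\<close> inverts it.\<close>

definition attach_first ::
    "nat \<Rightarrow> nat \<Rightarrow> nat list \<times> ((nat \<Rightarrow> nat) \<times> (nat \<times> nat \<Rightarrow> nat)) \<Rightarrow> (nat \<Rightarrow> nat) \<times> (nat \<times> nat \<Rightarrow> nat)" where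
  "attach_first n a0 z =
    ((\<lambda>j. if j = 0 then a0 - 1 - sum_list (fst z) else if j \<le> n then fst (snd z) (j - 1) else undefined),
     (\<lambda>p. if fst p < snd p \<and> snd p \<le> n then
             (if fst p = 0 then fst z ! (snd p - 1) else snd (snd z) (fst p - 1, snd p - 1))
          else undefined))"

definition detach_first ::
    "nat \<Rightarrow> (nat \<Rightarrow> nat) \<times> (nat \<times> nat \<Rightarrow> nat) \<Rightarrow> nat list \<times> ((nat \<Rightarrow> nat) \<times> (nat \<times> nat \<Rightarrow> nat))" where
  "detach_first n x = (map (\<lambda>j. snd x (0, Suc j)) [0..<n],
               restrict (\<lambda>j. fst x (Suc j)) {..<n},
               restrict (\<lambda>p. snd x (Suc (fst p), Suc (snd p))) (ct_pairs n))"

lemma ct_exponent_list_Cons_0: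
  assumes "length \<kappa> = length A" "\<forall>j<length A. k (0, Suc j) = \<kappa> ! j"
  shows "ct_exponent_list (a0 # A) c m k 0 = 1 - int a0 + int (m 0) + int (sum_list \<kappa>)"
proof -
  have "(\<Sum>i\<in>{0<..<Suc (length A)}. int (k (0, i))) = (\<Sum>j<length A. int (k (0, Suc j)))"
    by (simp only: atLeastSucLessThan_greaterThanLessThan[symmetric] sum.shift_bounds_Suc_ivl
        atLeast0LessThan)
  also have "\<dots> = int (sum_list \<kappa>)"
    using assms by (simp add: sum_list_sum_nth atLeast0LessThan)
  finally show ?thesis
    unfolding ct_exponent_list_def by simp
qed

lemma ct_exponent_list_Cons_Suc:
  assumes len: "length \<kappa> = length A" and j: "j < length A"
    and m: "\<forall>j<length A. m (Suc j) = m' j"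
    and k0: "\<forall>j<length A. k (0, Suc j) = \<kappa> ! j"
    and k: "\<forall>i j. i < j \<longrightarrow> j < length A \<longrightarrow> k (Suc i, Suc j) = k' (i, j)"
  shows "ct_exponent_list (a0 # A) c m k (Suc j) = ct_exponent_list (shift_params A c \<kappa>) c m' k' j"
proof -
  have "(\<Sum>i\<in>{Suc j<..<Suc (length A)}. int (k (Suc j, i))) = (\<Sum>i\<in>{j<..<length A}. int (k (Suc j, Suc i)))"
    by (simp only: atLeastSucLessThan_greaterThanLessThan[symmetric] sum.shift_bounds_Suc_ivl)
  also have "\<dots> = (\<Sum>i\<in>{j<..<length A}. int (k' (j, i)))"
    using k by (intro sum.cong) auto
  finally have row: "(\<Sum>i\<in>{Suc j<..<Suc (length A)}. int (k (Suc j, i))) = (\<Sum>i\<in>{j<..<length A}. int (k' (j, i)))" .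
  have "(\<Sum>i<Suc j. int c + int (k (i, Suc j))) = int c + int (k (0, Suc j)) + (\<Sum>i<j. int c + int (k (Suc i, Suc j)))"
    by (rule sum.lessThan_Suc_shift)
  also have "\<dots> = int c + int (\<kappa> ! j) + (\<Sum>i<j. int c + int (k' (i, j)))"
    using k k0 j by (auto intro!: sum.cong)
  finally have column: "(\<Sum>i<Suc j. int c + int (k (i, Suc j))) = int c + int (\<kappa> ! j) + (\<Sum>i<j. int c + int (k' (i, j)))" .
  show ?thesis
    unfolding ct_exponent_list_def using row column len j m by (simp add: nth_shift_params)
qed

lemma attach_first_mem:
  assumes "\<kappa> \<in> first_row_exponents (length A) a0" "x \<in> ct_terms_list (shift_params A c \<kappa>) c"
  shows "attach_first (length A) a0 (\<kappa>, x) \<in> ct_terms_list (a0 # A) c"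
proof -
  let ?n = "length A"
  obtain m' k' where x: "x = (m', k')" by (cases x)
  have len: "length \<kappa> = ?n" and lt: "sum_list \<kappa> < a0"
    using assms(1) by (auto simp: first_row_exponents_def)
  have exps: "\<forall>j<?n. ct_exponent_list (shift_params A c \<kappa>) c m' k' j = 0"
    using assms(2) len by (auto simp: ct_terms_list_def x)
  obtain m k where g: "attach_first ?n a0 (\<kappa>, x) = (m, k)" by fastforce
  have m0: "m 0 = a0 - 1 - sum_list \<kappa>" and mS: "\<forall>j<?n. m (Suc j) = m' j"
    using g by (auto simp: attach_first_def x)
  have k0: "\<forall>j<?n. k (0, Suc j) = \<kappa> ! j"
    and kS: "\<forall>i j. i < j \<longrightarrow> j < ?n \<longrightarrow> k (Suc i, Suc j) = k' (i, j)"
    using g by (auto simp: attach_first_def x)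
  have "ct_exponent_list (a0 # A) c m k j = 0" if "j < Suc ?n" for j
  proof (cases j)
    case 0
    then show ?thesis using ct_exponent_list_Cons_0[OF len k0] m0 lt by simp
  next
    case (Suc j')
    with that have "j' < ?n" by simp
    then show ?thesis
      using ct_exponent_list_Cons_Suc[OF len _ mS k0 kS] exps Suc by simp
  qed
  moreover have "m \<in> {..<Suc ?n} \<rightarrow>\<^sub>E UNIV" "k \<in> ct_pairs (Suc ?n) \<rightarrow>\<^sub>E UNIV"
    using g by (auto simp: attach_first_def PiE_def extensional_def mem_ct_pairs_Suc)
  ultimately show ?thesis
    unfolding g ct_terms_list_def by simp
qed

lemma detach_first_mem:
  assumes "y \<in> ct_terms_list (a0 # A) c"
  shows "detach_first (length A) y
           \<in> Sigma (first_row_exponents (length A) a0) (\<lambda>\<kappa>. ct_terms_list (shift_params A c \<kappa>) c)"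
proof -
  let ?n = "length A"
  obtain m k where y: "y = (m, k)" by (cases y)
  have exps: "\<forall>j<Suc ?n. ct_exponent_list (a0 # A) c m k j = 0"
    using assms by (auto simp: ct_terms_list_def y)
  obtain \<kappa> m' k' where d: "detach_first ?n y = (\<kappa>, m', k')" by (metis prod.exhaust)
  have len: "length \<kappa> = ?n" and k0: "\<forall>j<?n. k (0, Suc j) = \<kappa> ! j"
    using d by (auto simp: detach_first_def y)
  have mS: "\<forall>j<?n. m (Suc j) = m' j"
    and kS: "\<forall>i j. i < j \<longrightarrow> j < ?n \<longrightarrow> k (Suc i, Suc j) = k' (i, j)"
    using d by (auto simp: detach_first_def y ct_pairs_def)
  have "1 - int a0 + int (m 0) + int (sum_list \<kappa>) = 0"
    using exps ct_exponent_list_Cons_0[OF len k0, of a0 c m] by simp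
  then have "\<kappa> \<in> first_row_exponents ?n a0"
    using len by (simp add: first_row_exponents_def)
  moreover have "ct_exponent_list (shift_params A c \<kappa>) c m' k' j = 0" if "j < ?n" for j
    using ct_exponent_list_Cons_Suc[OF len that mS k0 kS, of a0 c] exps that by simp
  moreover have "m' \<in> {..<?n} \<rightarrow>\<^sub>E UNIV" "k' \<in> ct_pairs ?n \<rightarrow>\<^sub>E UNIV"
    using d[symmetric] by (simp_all add: detach_first_def)
  ultimately show ?thesis
    using len d by (simp add: ct_terms_list_def)
qed

lemma attach_detach_first:
  assumes "y \<in> ct_terms_list (a0 # A) c"
  shows "attach_first (length A) a0 (detach_first (length A) y) = y"
proof -
  let ?n = "length A"
  obtain m k where y: "y = (m, k)" by (cases y)
  obtain m'' k'' where g: "attach_first ?n a0 (detach_first ?n y) = (m'', k'')" by fastforce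
  have "(m'', k'') \<in> ct_terms_list (a0 # A) c"
    using attach_first_mem detach_first_mem[OF assms] g by (metis SigmaE)
  then have m'': "m'' \<in> {..<Suc ?n} \<rightarrow>\<^sub>E UNIV" and k'': "k'' \<in> ct_pairs (Suc ?n) \<rightarrow>\<^sub>E UNIV"
    by (auto simp: ct_terms_list_def)
  have m: "m \<in> {..<Suc ?n} \<rightarrow>\<^sub>E UNIV" and k: "k \<in> ct_pairs (Suc ?n) \<rightarrow>\<^sub>E UNIV"
    and exp0: "ct_exponent_list (a0 # A) c m k 0 = 0"
    using assms by (auto simp: ct_terms_list_def y)
  have "m'' = m"
  proof (rule PiE_ext[OF m'' m])
    fix j assume "j \<in> {..<Suc ?n}"
    show "m'' j = m j"
    proof (cases j)
      case 0
      let ?\<kappa> = "map (\<lambda>j. k (0, Suc j)) [0..<?n]"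
      have "1 - int a0 + int (m 0) + int (sum_list ?\<kappa>) = 0"
        using exp0 ct_exponent_list_Cons_0[of ?\<kappa> A k a0 c m] by simp
      then have "m 0 = a0 - 1 - sum_list ?\<kappa>"
        by linarith
      then show ?thesis
        using g 0 by (auto simp: attach_first_def detach_first_def y simp del: sum_list_map_eq_sum_count)
    qed (use g \<open>j \<in> {..<Suc ?n}\<close> in \<open>auto simp: attach_first_def detach_first_def y\<close>)
  qed
  moreover have "k'' = k"
  proof (rule PiE_ext[OF k'' k])
    fix p assume "p \<in> ct_pairs (Suc ?n)"
    then obtain i j where p: "p = (i, Suc j)" "i \<le> j" "j < ?n"
      by (cases p, case_tac "snd p") (auto simp: ct_pairs_def)
    then show "k'' p = k p"
      using g by (cases i) (auto simp: attach_first_def detach_first_def y ct_pairs_def)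
  qed
  ultimately show ?thesis
    using g y by simp
qed

lemma detach_attach_first:
  assumes "\<kappa> \<in> first_row_exponents (length A) a0" "x \<in> ct_terms_list (shift_params A c \<kappa>) c"
  shows "detach_first (length A) (attach_first (length A) a0 (\<kappa>, x)) = (\<kappa>, x)"
proof -
  let ?n = "length A"
  obtain m' k' where x: "x = (m', k')" by (cases x)
  have len: "length \<kappa> = ?n"
    using assms(1) by (auto simp: first_row_exponents_def)
  have "m' \<in> {..<?n} \<rightarrow>\<^sub>E UNIV" and "k' \<in> ct_pairs ?n \<rightarrow>\<^sub>E UNIV"
    using assms(2) len by (auto simp: ct_terms_list_def x)
  then have "restrict m' {..<?n} = m'" "restrict k' (ct_pairs ?n) = k'"
    by (simp_all add: PiE_restrict)
  moreover have "restrict (\<lambda>j. fst (attach_first ?n a0 (\<kappa>, x)) (Suc j)) {..<?n} = restrict m' {..<?n}"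
    and "restrict (\<lambda>p. snd (attach_first ?n a0 (\<kappa>, x)) (Suc (fst p), Suc (snd p))) (ct_pairs ?n)
      = restrict k' (ct_pairs ?n)"
    by (auto simp: attach_first_def x ct_pairs_def intro!: restrict_ext)
  moreover have "map (\<lambda>j. snd (attach_first ?n a0 (\<kappa>, x)) (0, Suc j)) [0..<?n] = \<kappa>"
    using len by (auto simp: attach_first_def intro!: nth_equalityI)
  ultimately show ?thesis
    by (simp add: detach_first_def x)
qed

lemma ct_weight_attach_first:
  assumes "length \<kappa> = n"
  shows "ct_weight (b0 # B) (Suc n) c (attach_first n a0 (\<kappa>, x))
       = negpow_coeff b0 (a0 - 1 - sum_list \<kappa>) * prod_list (map (negpow_coeff c) \<kappa>) * ct_weight B n c x"
proof -
  let ?g = "attach_first n a0 (\<kappa>, x)"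
  have diagonal: "(\<Prod>i<Suc n. negpow_coeff ((b0 # B) ! i) (fst ?g i))
      = negpow_coeff b0 (a0 - 1 - sum_list \<kappa>) * (\<Prod>i<n. negpow_coeff (B ! i) (fst x i))"
    by (subst prod.lessThan_Suc_shift) (auto simp: attach_first_def intro!: prod.cong)
  have "(\<Prod>p\<in>(\<lambda>j. (0, Suc j)) ` {..<n}. negpow_coeff c (snd ?g p)) = (\<Prod>j<n. negpow_coeff c (\<kappa> ! j))"
    by (subst prod.reindex) (auto simp: inj_on_def attach_first_def intro!: prod.cong)
  also have "\<dots> = prod_list (map (negpow_coeff c) \<kappa>)"
    using assms by (simp add: prod.list_conv_set_nth atLeast0LessThan)
  finally have first_row: "(\<Prod>p\<in>(\<lambda>j. (0, Suc j)) ` {..<n}. negpow_coeff c (snd ?g p))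
      = prod_list (map (negpow_coeff c) \<kappa>)" .
  have rest: "(\<Prod>p\<in>map_prod Suc Suc ` ct_pairs n. negpow_coeff c (snd ?g p))
      = (\<Prod>p\<in>ct_pairs n. negpow_coeff c (snd x p))"
    by (subst prod.reindex) (auto simp: attach_first_def ct_pairs_def inj_on_def intro!: prod.cong)
  have "(\<Prod>p\<in>ct_pairs (Suc n). negpow_coeff c (snd ?g p))
      = prod_list (map (negpow_coeff c) \<kappa>) * (\<Prod>p\<in>ct_pairs n. negpow_coeff c (snd x p))"
    unfolding ct_pairs_Suc first_row[symmetric] rest[symmetric]
    by (rule prod.union_disjoint) (auto simp: finite_ct_pairs)
  then show ?thesis
    unfolding ct_weight_def diagonal by (simp add: mult_ac)
qed

lemma ct_terms_list_Cons:
  "ct_terms_list (a0 # A) c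
     = attach_first (length A) a0 ` Sigma (first_row_exponents (length A) a0)
                                         (\<lambda>\<kappa>. ct_terms_list (shift_params A c \<kappa>) c)"
proof (intro subset_antisym subsetI)
  fix y assume y: "y \<in> ct_terms_list (a0 # A) c"
  show "y \<in> attach_first (length A) a0 ` Sigma (first_row_exponents (length A) a0)
                                         (\<lambda>\<kappa>. ct_terms_list (shift_params A c \<kappa>) c)"
    using detach_first_mem[OF y] attach_detach_first[OF y] by (metis image_eqI)
qed (auto intro: attach_first_mem)

lemma finite_ct_terms_list: "finite (ct_terms_list A c)"
proof (induction "length A" arbitrary: A)
  case 0
  then have "ct_terms_list A c \<subseteq> {(\<lambda>_. undefined, \<lambda>_. undefined)}"
    by (auto simp: ct_terms_list_def ct_pairs_def)
  then show ?case
    by (rule finite_subset) simp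
next
  case (Suc n)
  then obtain a0 A' where "A = a0 # A'" "length A' = n"
    by (cases A) auto
  moreover have "finite (Sigma (first_row_exponents n a0) (\<lambda>\<kappa>. ct_terms_list (shift_params A' c \<kappa>) c))"
    using Suc.hyps(1) \<open>length A' = n\<close>
    by (intro finite_SigmaI finite_first_row_exponents) (auto simp: first_row_exponents_def)
  ultimately show ?case
    by (simp add: ct_terms_list_Cons)
qed

text \<open>Since \<open>(x\<^sub>j - x\<^sub>1) ^ (-c) = x\<^sub>j ^ (-c) * (1 - x\<^sub>1/x\<^sub>j) ^ (-c)\<close>, taking the power \<open>\<kappa>\<^sub>j\<close>
  of \<open>x\<^sub>1/x\<^sub>j\<close> raises \<open>a\<^sub>j\<close> by \<open>c + \<kappa>\<^sub>j\<close>.\<close>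

lemma M_list_Cons:
  assumes "a0 \<le> N"
  shows "M_list (a0 # A) (b0 # B) c
    = (\<Sum>\<kappa>\<in>bounded_lists (length A) N. negpow_coeff_int b0 (int a0 - 1 - int (sum_list \<kappa>))
         * prod_list (map (negpow_coeff c) \<kappa>) * M_list (shift_params A c \<kappa>) B c)"
proof -
  let ?n = "length A"
  let ?K = "first_row_exponents ?n a0"
  let ?T = "\<lambda>\<kappa>. ct_terms_list (shift_params A c \<kappa>) c"
  have "inj_on (attach_first ?n a0) (Sigma ?K ?T)"
    by (rule inj_on_inverseI[where g = "detach_first ?n"]) (auto simp: detach_attach_first)
  then have "M_list (a0 # A) (b0 # B) c
      = (\<Sum>z\<in>Sigma ?K ?T. ct_weight (b0 # B) (Suc ?n) c (attach_first ?n a0 z))"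
    by (simp add: M_list_def ct_terms_list_Cons sum.reindex)
  also have "\<dots> = (\<Sum>\<kappa>\<in>?K. \<Sum>x\<in>?T \<kappa>. ct_weight (b0 # B) (Suc ?n) c (attach_first ?n a0 (\<kappa>, x)))"
    by (simp add: sum.Sigma finite_first_row_exponents finite_ct_terms_list split_def)
  also have "\<dots> = (\<Sum>\<kappa>\<in>?K. negpow_coeff b0 (a0 - 1 - sum_list \<kappa>) * prod_list (map (negpow_coeff c) \<kappa>)
         * M_list (shift_params A c \<kappa>) B c)"
  proof (rule sum.cong)
    fix \<kappa> assume "\<kappa> \<in> ?K"
    then have len: "length \<kappa> = ?n" by (simp add: first_row_exponents_def)
    show "(\<Sum>x\<in>?T \<kappa>. ct_weight (b0 # B) (Suc ?n) c (attach_first ?n a0 (\<kappa>, x)))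
        = negpow_coeff b0 (a0 - 1 - sum_list \<kappa>) * prod_list (map (negpow_coeff c) \<kappa>)
          * M_list (shift_params A c \<kappa>) B c"
      unfolding ct_weight_attach_first[OF len] M_list_def length_shift_params[OF len]
      by (simp add: sum_distrib_left)
  qed simp
  also have "\<dots> = (\<Sum>\<kappa>\<in>bounded_lists ?n N. negpow_coeff_int b0 (int a0 - 1 - int (sum_list \<kappa>))
         * prod_list (map (negpow_coeff c) \<kappa>) * M_list (shift_params A c \<kappa>) B c)"
  proof (rule sum.mono_neutral_cong_left)
    show "finite (bounded_lists ?n N)"
      by (rule finite_bounded_lists)
    show "?K \<subseteq> bounded_lists ?n N"
      using assms by (rule first_row_exponents_subset)
  qed (auto simp: first_row_exponents_def bounded_lists_def negpow_coeff_int_def nat_diff_distrib)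
  finally show ?thesis .
qed

lemma M_list_Nil: "M_list [] B c = 1"
proof -
  have "ct_terms_list [] c = {(\<lambda>_. undefined, \<lambda>_. undefined)}"
    by (auto simp: ct_terms_list_def ct_pairs_def)
  then show ?thesis
    by (simp add: M_list_def ct_weight_def ct_pairs_def)
qed

lemma M_list_single: "M_list [a] [b] c = negpow_coeff_int b (int a - 1)"
proof -
  have "bounded_lists 0 a = {[]}"
    by (auto simp: bounded_lists_def)
  then show ?thesis
    using M_list_Cons[of a a "[]" b "[]" c] by (simp add: M_list_Nil shift_params_def)
qed

section \<open>Reversal symmetry\<close>

lemma shift_params_snoc:
  "length \<kappa> = length A \<Longrightarrow> shift_params (A @ [a]) c (\<kappa> @ [t]) = shift_params A c \<kappa> @ [a + c + t]"
  by (simp add: shift_params_def)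

lemma rev_shift_params:
  "length \<kappa> = length A \<Longrightarrow> rev (shift_params A c \<kappa>) = shift_params (rev A) c (rev \<kappa>)"
  by (simp add: shift_params_def zip_rev rev_map)

lemma zero_notin_shift_params:
  "0 \<notin> set A \<Longrightarrow> length \<kappa> = length A \<Longrightarrow> 0 \<notin> set (shift_params A c \<kappa>)"
  by (auto simp: shift_params_def set_zip) (metis nth_mem)

lemma sum_bounded_lists_Suc:
  "(\<Sum>\<kappa>\<in>bounded_lists (Suc r) N. g \<kappa>) = (\<Sum>u\<in>bounded_lists r N. \<Sum>t\<le>N. g (u @ [t]))"
proof -
  have "(\<Sum>\<kappa>\<in>bounded_lists (Suc r) N. g \<kappa>) = (\<Sum>(u, t)\<in>bounded_lists r N \<times> {..N}. g (u @ [t]))"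
  proof (rule sum.reindex_bij_witness[where i = "\<lambda>(u, t). u @ [t]" and j = "\<lambda>\<kappa>. (butlast \<kappa>, last \<kappa>)"])
    fix \<kappa> assume \<kappa>: "\<kappa> \<in> bounded_lists (Suc r) N"
    then have "\<kappa> \<noteq> []" by (auto simp: bounded_lists_def)
    with \<kappa> show "(butlast \<kappa>, last \<kappa>) \<in> bounded_lists r N \<times> {..N}"
      by (auto simp: bounded_lists_def dest: in_set_butlastD) (metis last_in_set subsetD atMost_iff)
    show "(case (butlast \<kappa>, last \<kappa>) of (u, t) \<Rightarrow> u @ [t]) = \<kappa>"
      and "(case (butlast \<kappa>, last \<kappa>) of (u, t) \<Rightarrow> g (u @ [t])) = g \<kappa>"
      using \<open>\<kappa> \<noteq> []\<close> by simp_all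
  qed (auto simp: bounded_lists_def)
  also have "\<dots> = (\<Sum>u\<in>bounded_lists r N. \<Sum>t\<le>N. g (u @ [t]))"
    by (simp add: sum.cartesian_product)
  finally show ?thesis .
qed

lemma sum_bounded_lists_rev: "(\<Sum>u\<in>bounded_lists r N. g (rev u)) = (\<Sum>u\<in>bounded_lists r N. g u)"
  by (rule sum.reindex_bij_witness[where i = rev and j = rev]) (auto simp: bounded_lists_def)

lemma sum_bounded_lists_rev2:
  "(\<Sum>u\<in>bounded_lists r N. \<Sum>w\<in>bounded_lists r N. g (rev u) (rev w))
   = (\<Sum>u\<in>bounded_lists r N. \<Sum>w\<in>bounded_lists r N. g u w)"
proof -
  have "(\<Sum>u\<in>bounded_lists r N. \<Sum>w\<in>bounded_lists r N. g (rev u) (rev w))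
      = (\<Sum>u\<in>bounded_lists r N. \<Sum>w\<in>bounded_lists r N. g (rev u) w)"
    by (rule sum.cong[OF refl], rule sum_bounded_lists_rev)
  also have "\<dots> = (\<Sum>u\<in>bounded_lists r N. \<Sum>w\<in>bounded_lists r N. g u w)"
    by (rule sum_bounded_lists_rev)
  finally show ?thesis .
qed

definition reversal_symmetric :: "nat \<Rightarrow> nat \<Rightarrow> bool" where
  "reversal_symmetric c n \<longleftrightarrow>
     (\<forall>A B. length A = n \<longrightarrow> length B = n \<longrightarrow> 0 \<notin> set A \<longrightarrow> 0 \<notin> set B
        \<longrightarrow> M_list A B c = M_list (rev B) (rev A) c)"

lemma reversal_symmetricD:
  "reversal_symmetric c n \<Longrightarrow> length A = n \<Longrightarrow> length B = n \<Longrightarrow> 0 \<notin> set A \<Longrightarrow> 0 \<notin> set B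
   \<Longrightarrow> M_list A B c = M_list (rev B) (rev A) c"
  unfolding reversal_symmetric_def by blast

lemma prod_list_map_rev:
  fixes f :: "'a \<Rightarrow> 'b::comm_monoid_mult"
  shows "prod_list (map f (rev xs)) = prod_list (map f xs)"
  by (metis prod_list.rev rev_map)

lemma M_list_snoc:
  assumes sym: "reversal_symmetric c (Suc n)" "reversal_symmetric c n"
    and len: "length X = n" "length Y = n"
    and pos: "0 \<notin> set X" "0 \<notin> set Y" "0 < x" "0 < y"
    and "y \<le> N"
  shows "M_list (X @ [x]) (Y @ [y]) c
    = (\<Sum>w\<in>bounded_lists n N. negpow_coeff_int x (int y - 1 - int (sum_list w))
         * prod_list (map (negpow_coeff c) w) * M_list X (shift_params Y c w) c)"
proof -
  have swap: "M_list (shift_params (rev Y) c v) (rev X) c = M_list X (shift_params Y c (rev v)) c"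
    if "v \<in> bounded_lists n N" for v
  proof -
    have "length v = n"
      using that by (simp add: bounded_lists_def)
    then have "M_list (shift_params (rev Y) c v) (rev X) c
        = M_list (rev (rev X)) (rev (shift_params (rev Y) c v)) c"
      using len pos zero_notin_shift_params[of "rev Y" v c]
      by (intro reversal_symmetricD[OF sym(2)]) auto
    also have "\<dots> = M_list X (shift_params Y c (rev v)) c"
      using rev_shift_params[of v "rev Y" c] \<open>length v = n\<close> len by simp
    finally show ?thesis .
  qed
  have "M_list (X @ [x]) (Y @ [y]) c = M_list (rev (Y @ [y])) (rev (X @ [x])) c"
    by (rule reversal_symmetricD[OF sym(1)]) (use len pos in auto)
  also have "\<dots> = M_list (y # rev Y) (x # rev X) c"
    by simp
  also have "\<dots> = (\<Sum>v\<in>bounded_lists n N. negpow_coeff_int x (int y - 1 - int (sum_list v))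
         * prod_list (map (negpow_coeff c) v) * M_list (shift_params (rev Y) c v) (rev X) c)"
    using M_list_Cons[OF \<open>y \<le> N\<close>, of "rev Y" x "rev X" c] len by (simp only: length_rev)
  also have "\<dots> = (\<Sum>v\<in>bounded_lists n N. negpow_coeff_int x (int y - 1 - int (sum_list (rev v)))
         * prod_list (map (negpow_coeff c) (rev v)) * M_list X (shift_params Y c (rev v)) c)"
    by (intro sum.cong refl) (simp add: swap prod_list_map_rev sum_list_rev)
  also have "\<dots> = (\<Sum>w\<in>bounded_lists n N. negpow_coeff_int x (int y - 1 - int (sum_list w))
         * prod_list (map (negpow_coeff c) w) * M_list X (shift_params Y c w) c)"
    by (rule sum_bounded_lists_rev)
  finally show ?thesis .
qed

lemma M_list_Cons_snoc:
  assumes sym: "reversal_symmetric c (Suc r)" "reversal_symmetric c r"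
    and len: "length A = r" "length B = r"
    and pos: "0 \<notin> set A" "0 \<notin> set B" "0 < al" "0 < bl"
    and N: "a0 \<le> N" "bl \<le> N"
  shows "M_list (a0 # A @ [al]) (b0 # B @ [bl]) c
    = (\<Sum>u\<in>bounded_lists r N. \<Sum>w\<in>bounded_lists r N.
         prod_list (map (negpow_coeff c) u) * prod_list (map (negpow_coeff c) w)
         * M_list (shift_params A c u) (shift_params B c w) c
         * corner_kernel N c b0 al (int a0 - 1 - int (sum_list u)) (int bl - 1 - int (sum_list w)))"
proof -
  let ?L = "bounded_lists r N"
  let ?P = "\<lambda>u. prod_list (map (negpow_coeff c) u)"
  have last: "M_list (shift_params A c u @ [al + c + t]) (B @ [bl]) c
      = (\<Sum>w\<in>?L. negpow_coeff_int (al + c + t) (int bl - 1 - int (sum_list w))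
           * ?P w * M_list (shift_params A c u) (shift_params B c w) c)"
    if "u \<in> ?L" for u t
  proof (rule M_list_snoc[OF sym])
    show "length (shift_params A c u) = r" "0 \<notin> set (shift_params A c u)"
      using that len pos zero_notin_shift_params[of A u c] by (simp_all add: bounded_lists_def)
  qed (use len pos N in auto)
  have "M_list (a0 # A @ [al]) (b0 # B @ [bl]) c
      = (\<Sum>\<kappa>\<in>bounded_lists (Suc r) N. negpow_coeff_int b0 (int a0 - 1 - int (sum_list \<kappa>))
           * ?P \<kappa> * M_list (shift_params (A @ [al]) c \<kappa>) (B @ [bl]) c)"
    using M_list_Cons[OF N(1), of "A @ [al]" b0 "B @ [bl]" c] len by simp
  also have "\<dots> = (\<Sum>u\<in>?L. \<Sum>t\<le>N. negpow_coeff_int b0 (int a0 - 1 - int (sum_list (u @ [t])))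
           * ?P (u @ [t]) * M_list (shift_params (A @ [al]) c (u @ [t])) (B @ [bl]) c)"
    by (rule sum_bounded_lists_Suc)
  also have "\<dots> = (\<Sum>u\<in>?L. \<Sum>t\<le>N. negpow_coeff_int b0 (int a0 - 1 - int (sum_list u) - int t)
           * (?P u * negpow_coeff c t) * M_list (shift_params A c u @ [al + c + t]) (B @ [bl]) c)"
    by (intro sum.cong refl) (auto simp: bounded_lists_def shift_params_snoc len diff_diff_eq add.assoc)
  also have "\<dots> = (\<Sum>u\<in>?L. \<Sum>t\<le>N. \<Sum>w\<in>?L. negpow_coeff_int b0 (int a0 - 1 - int (sum_list u) - int t)
           * (?P u * negpow_coeff c t) * (negpow_coeff_int (al + c + t) (int bl - 1 - int (sum_list w))
           * ?P w * M_list (shift_params A c u) (shift_params B c w) c))"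
    by (intro sum.cong refl) (simp add: last sum_distrib_left)
  also have "\<dots> = (\<Sum>u\<in>?L. \<Sum>w\<in>?L. \<Sum>t\<le>N. negpow_coeff_int b0 (int a0 - 1 - int (sum_list u) - int t)
           * (?P u * negpow_coeff c t) * (negpow_coeff_int (al + c + t) (int bl - 1 - int (sum_list w))
           * ?P w * M_list (shift_params A c u) (shift_params B c w) c))"
    by (intro sum.cong refl sum.swap)
  finally show ?thesis
    by (simp add: corner_kernel_def sum_distrib_left mult_ac)
qed

text \<open>The induction hypothesis for \<open>r\<close> variables turns the inner constant terms of the
  reversed lists back into those of the original ones.\<close>

lemma M_list_rev_Cons_snoc:
  assumes sym: "reversal_symmetric c (Suc r)" "reversal_symmetric c r"
    and len: "length A = r" "length B = r"
    and pos: "0 \<notin> set A" "0 \<notin> set B" "0 < a0" "0 < b0"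
    and N: "a0 \<le> N" "bl \<le> N"
  shows "M_list (bl # rev B @ [b0]) (al # rev A @ [a0]) c
    = (\<Sum>u\<in>bounded_lists r N. \<Sum>w\<in>bounded_lists r N.
         prod_list (map (negpow_coeff c) u) * prod_list (map (negpow_coeff c) w)
         * M_list (shift_params A c u) (shift_params B c w) c
         * corner_kernel N c al b0 (int bl - 1 - int (sum_list w)) (int a0 - 1 - int (sum_list u)))"
proof -
  let ?L = "bounded_lists r N"
  let ?P = "\<lambda>u. prod_list (map (negpow_coeff c) u)"
  let ?K = "\<lambda>w u. corner_kernel N c al b0 (int bl - 1 - int (sum_list w)) (int a0 - 1 - int (sum_list u))"
  have swap: "M_list (shift_params (rev B) c w) (shift_params (rev A) c u) c
      = M_list (shift_params A c (rev u)) (shift_params B c (rev w)) c"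
    if "u \<in> ?L" "w \<in> ?L" for u w
  proof -
    have "length u = r" "length w = r"
      using that by (simp_all add: bounded_lists_def)
    then have "M_list (shift_params (rev B) c w) (shift_params (rev A) c u) c
        = M_list (rev (shift_params (rev A) c u)) (rev (shift_params (rev B) c w)) c"
      using len pos zero_notin_shift_params[of "rev A" u c] zero_notin_shift_params[of "rev B" w c]
      by (intro reversal_symmetricD[OF sym(2)]) auto
    also have "\<dots> = M_list (shift_params A c (rev u)) (shift_params B c (rev w)) c"
      using \<open>length u = r\<close> \<open>length w = r\<close> len by (simp add: rev_shift_params)
    finally show ?thesis .
  qed
  have "M_list (bl # rev B @ [b0]) (al # rev A @ [a0]) c
      = (\<Sum>w\<in>?L. \<Sum>u\<in>?L. ?P w * ?P u * M_list (shift_params (rev B) c w) (shift_params (rev A) c u) c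
           * ?K w u)"
    by (rule M_list_Cons_snoc[OF sym]) (use len pos N in auto)
  also have "\<dots> = (\<Sum>w\<in>?L. \<Sum>u\<in>?L. ?P (rev w) * ?P (rev u)
           * M_list (shift_params A c (rev u)) (shift_params B c (rev w)) c * ?K (rev w) (rev u))"
    by (intro sum.cong refl) (simp add: swap prod_list_map_rev sum_list_rev)
  also have "\<dots> = (\<Sum>w\<in>?L. \<Sum>u\<in>?L. ?P w * ?P u * M_list (shift_params A c u) (shift_params B c w) c * ?K w u)"
    by (rule sum_bounded_lists_rev2)
  also have "\<dots> = (\<Sum>u\<in>?L. \<Sum>w\<in>?L. ?P u * ?P w * M_list (shift_params A c u) (shift_params B c w) c * ?K w u)"
    by (subst sum.swap) (simp add: mult_ac)
  finally show ?thesis .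
qed

lemma length_Suc_Suc_ConsE:
  assumes "length xs = Suc (Suc n)"
  obtains x ys y where "xs = x # ys @ [y]" "length ys = n"
proof -
  obtain x zs where "xs = x # zs"
    using assms by (cases xs) auto
  moreover obtain ys y where "zs = ys @ [y]"
    using assms calculation by (cases zs rule: rev_cases) auto
  ultimately show thesis
    using that assms by simp
qed

lemma reversal_symmetric_Suc_Suc:
  assumes sym: "reversal_symmetric c (Suc r)" "reversal_symmetric c r"
  shows "reversal_symmetric c (Suc (Suc r))"
  unfolding reversal_symmetric_def
proof (intro allI impI)
  fix A B :: "nat list"
  assume "length A = Suc (Suc r)" "length B = Suc (Suc r)" and pos: "0 \<notin> set A" "0 \<notin> set B"
  then obtain a0 A' al b0 B' bl where AB: "A = a0 # A' @ [al]" "B = b0 # B' @ [bl]"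
    and len: "length A' = r" "length B' = r"
    by (metis length_Suc_Suc_ConsE)
  define N where "N = a0 + bl"
  let ?L = "bounded_lists r N"
  let ?T = "\<lambda>u w. prod_list (map (negpow_coeff c) u) * prod_list (map (negpow_coeff c) w)
    * M_list (shift_params A' c u) (shift_params B' c w) c"
  let ?\<alpha> = "\<lambda>u. int a0 - 1 - int (sum_list u)"
  let ?\<beta> = "\<lambda>w. int bl - 1 - int (sum_list w)"
  have "M_list A B c = (\<Sum>u\<in>?L. \<Sum>w\<in>?L. ?T u w * corner_kernel N c b0 al (?\<alpha> u) (?\<beta> w))"
    unfolding AB by (rule M_list_Cons_snoc[OF sym len]) (use pos AB in \<open>auto simp: N_def\<close>)
  also have "\<dots> = (\<Sum>u\<in>?L. \<Sum>w\<in>?L. ?T u w * corner_kernel N c al b0 (?\<beta> w) (?\<alpha> u))"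
    by (intro sum.cong refl arg_cong2[where f = "(*)"] corner_kernel_swap) (simp_all add: N_def)
  also have "\<dots> = M_list (rev B) (rev A) c"
    unfolding AB by (simp, rule M_list_rev_Cons_snoc[OF sym len, symmetric])
      (use pos AB in \<open>auto simp: N_def\<close>)
  finally show "M_list A B c = M_list (rev B) (rev A) c" .
qed

lemma reversal_symmetric_0: "reversal_symmetric c 0"
  unfolding reversal_symmetric_def by simp

lemma reversal_symmetric_1: "reversal_symmetric c (Suc 0)"
  unfolding reversal_symmetric_def
proof (intro allI impI)
  fix A B :: "nat list"
  assume "length A = Suc 0" "length B = Suc 0" "0 \<notin> set A" "0 \<notin> set B"
  then obtain a b where "A = [a]" "B = [b]" "0 < a" "0 < b"
    by (auto simp: length_Suc_conv)
  then show "M_list A B c = M_list (rev B) (rev A) c"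
    using negpow_coeff_pred_swap[of a b]
    by (simp add: M_list_single negpow_coeff_int_def nat_diff_distrib)
qed

lemma reversal_symmetric: "reversal_symmetric c n"
  by (induction n rule: induct_nat_012)
    (auto intro: reversal_symmetric_0 reversal_symmetric_1 reversal_symmetric_Suc_Suc)

theorem corollary4p1:
  fixes n a b c :: nat
  assumes "n > 0" and "a > 0" and "b > 0"
  shows "M n a b c = M n b a c"
proof -
  have "M n a b c = M_list (replicate n a) (replicate n b) c"
    by (rule M_eq_M_list)
  also have "\<dots> = M_list (rev (replicate n b)) (rev (replicate n a)) c"
    by (rule reversal_symmetricD[OF reversal_symmetric]) (use assms in auto)
  also have "\<dots> = M n b a c"
    by (simp add: M_eq_M_list)
  finally show ?thesis .
qed

end
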